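(* Let $A$ be a finite set, $\rho\subseteq A^n$, $(a_1,\dots,a_n)\in A^n\setminus\rho$, and $b_1,\dots,b_n\in A$ with $b_i\neq a_i$ for all $i$, such that $$(\{a_1,b_1\}\times\{a_2,b_2\}\times\dots\times\{a_n,b_n\})\setminus\{(a_1,\dots,a_n)\}\subseteq\rho.$$ Then $\rho$ is a key relation and $(a_1,\dots,a_n)$ is a key tuple for $\rho$.
   Context: A unary vector-function is a tuple $\Psi=(\psi_1,\dots,\psi_n)$ of maps $\psi_i:A\to A$ acting coordinatewise; it preserves $\rho$ if $\Psi(\rho)\subseteq\rho$. $\rho\subseteq A^n$ is a key relation if there is $\beta\in A^n\setminus\rho$ (a key tuple) such that every $\alpha\in A^n\setminus\rho$ is mapped to $\beta$ by some unary vector-function preserving $\rho$. *)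

theory Defs
  imports Main
begin

definition tuples :: "'a set \<Rightarrow> nat \<Rightarrow> 'a list set" where
  "tuples A n = {xs. length xs = n \<and> set xs \<subseteq> A}"

definition unary_vf :: "'a set \<Rightarrow> nat \<Rightarrow> (nat \<Rightarrow> 'a \<Rightarrow> 'a) \<Rightarrow> bool" where
  "unary_vf A n \<Psi> \<longleftrightarrow> (\<forall>i<n. \<forall>x\<in>A. \<Psi> i x \<in> A)"

definition apply_vf :: "(nat \<Rightarrow> 'a \<Rightarrow> 'a) \<Rightarrow> 'a list \<Rightarrow> 'a list" where
  "apply_vf \<Psi> xs = map (\<lambda>i. \<Psi> i (xs ! i)) [0..<length xs]"

definition preserves_vf :: "(nat \<Rightarrow> 'a \<Rightarrow> 'a) \<Rightarrow> 'a list set \<Rightarrow> bool" where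
  "preserves_vf \<Psi> \<rho> \<longleftrightarrow> apply_vf \<Psi> ` \<rho> \<subseteq> \<rho>"

definition key_tuple :: "'a set \<Rightarrow> nat \<Rightarrow> 'a list set \<Rightarrow> 'a list \<Rightarrow> bool" where
  "key_tuple A n \<rho> \<beta> \<longleftrightarrow> \<beta> \<in> tuples A n - \<rho> \<and>
     (\<forall>\<alpha> \<in> tuples A n - \<rho>. \<exists>\<Psi>. unary_vf A n \<Psi> \<and> preserves_vf \<Psi> \<rho> \<and> apply_vf \<Psi> \<alpha> = \<beta>)"

definition key_relation :: "'a set \<Rightarrow> nat \<Rightarrow> 'a list set \<Rightarrow> bool" where
  "key_relation A n \<rho> \<longleftrightarrow> \<rho> \<subseteq> tuples A n \<and> (\<exists>\<beta>. key_tuple A n \<rho> \<beta>)"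

end

theory Submission
  imports Defs
begin

text \<open>Given a non-tuple \<alpha>, send each coordinate value \<alpha>!i to a!i and every other value to b!i.
  Such a vector-function maps everything into the box \<Prod>{a!i, b!i}, and since b!i \<noteq> a!i
  only \<alpha> itself is mapped to a. Hence every tuple of \<rho> lands in the box minus a, i.e. in \<rho>.\<close>

lemma length_apply_vf [simp]: "length (apply_vf \<Psi> xs) = length xs"
  by (simp add: apply_vf_def)

lemma nth_apply_vf [simp]: "i < length xs \<Longrightarrow> apply_vf \<Psi> xs ! i = \<Psi> i (xs ! i)"
  by (simp add: apply_vf_def)

lemma tuples_iff_nth: "xs \<in> tuples A n \<longleftrightarrow> length xs = n \<and> (\<forall>i<n. xs ! i \<in> A)"
  by (auto simp: tuples_def set_conv_nth)

lemma apply_vf_in_tuples: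
  assumes "unary_vf A n \<Psi>" and "xs \<in> tuples A n"
  shows "apply_vf \<Psi> xs \<in> tuples A n"
  using assms by (simp add: tuples_iff_nth unary_vf_def)

definition separating_vf :: "'a list \<Rightarrow> 'a list \<Rightarrow> 'a list \<Rightarrow> nat \<Rightarrow> 'a \<Rightarrow> 'a" where
  "separating_vf \<alpha> a b i x = (if x = \<alpha> ! i then a ! i else b ! i)"

lemma unary_vf_separating_vf:
  assumes "a \<in> tuples A n" and "b \<in> tuples A n"
  shows "unary_vf A n (separating_vf \<alpha> a b)"
  using assms by (simp add: unary_vf_def separating_vf_def tuples_iff_nth)

lemma apply_separating_vf_self:
  assumes "length \<alpha> = length a"
  shows "apply_vf (separating_vf \<alpha> a b) \<alpha> = a"
  using assms by (intro nth_equalityI) (simp_all add: separating_vf_def)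

lemma apply_separating_vf_eq_target_imp:
  assumes "apply_vf (separating_vf \<alpha> a b) xs = a"
    and "length \<alpha> = length xs"
    and "\<forall>i<length xs. b ! i \<noteq> a ! i"
  shows "xs = \<alpha>"
proof (rule nth_equalityI)
  fix i assume "i < length xs"
  then have "separating_vf \<alpha> a b i (xs ! i) = a ! i"
    using nth_apply_vf assms(1) by metis
  with \<open>i < length xs\<close> assms(3) show "xs ! i = \<alpha> ! i"
    by (auto simp: separating_vf_def split: if_splits)
qed (use assms(2) in simp)

lemma preserves_separating_vf:
  assumes "\<rho> \<subseteq> tuples A n" and "a \<in> tuples A n" and "b \<in> tuples A n"
    and "\<forall>i<n. b ! i \<noteq> a ! i"
    and box: "{xs \<in> tuples A n. \<forall>i<n. xs ! i \<in> {a ! i, b ! i}} - {a} \<subseteq> \<rho>"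
    and "\<alpha> \<in> tuples A n - \<rho>"
  shows "preserves_vf (separating_vf \<alpha> a b) \<rho>"
  unfolding preserves_vf_def
proof clarify
  fix xs assume "xs \<in> \<rho>"
  then have xs: "xs \<in> tuples A n" using assms(1) by blast
  let ?ys = "apply_vf (separating_vf \<alpha> a b) xs"
  have "?ys \<in> tuples A n"
    using apply_vf_in_tuples unary_vf_separating_vf assms(2,3) xs by blast
  moreover have "\<forall>i<n. ?ys ! i \<in> {a ! i, b ! i}"
    using xs by (simp add: tuples_def separating_vf_def)
  moreover have "?ys \<noteq> a"
    using apply_separating_vf_eq_target_imp[of \<alpha> a b xs] assms(4,6) xs \<open>xs \<in> \<rho>\<close>
    by (auto simp: tuples_def)
  ultimately show "?ys \<in> \<rho>" using box by blast
qed

theorem mainTheorem5: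
  fixes A :: "'x set" and n :: nat and \<rho> :: "'x list set" and a b :: "'x list"
  assumes "finite A"
    and "\<rho> \<subseteq> tuples A n"
    and "a \<in> tuples A n" and "a \<notin> \<rho>"
    and "b \<in> tuples A n"
    and "\<forall>i<n. b ! i \<noteq> a ! i"
    and "{xs \<in> tuples A n. \<forall>i<n. xs ! i \<in> {a ! i, b ! i}} - {a} \<subseteq> \<rho>"
  shows "key_relation A n \<rho> \<and> key_tuple A n \<rho> a"
proof -
  have "key_tuple A n \<rho> a"
    unfolding key_tuple_def
  proof (intro conjI ballI exI)
    show "a \<in> tuples A n - \<rho>" using assms(3,4) by simp
    fix \<alpha> assume \<alpha>: "\<alpha> \<in> tuples A n - \<rho>"
    show "unary_vf A n (separating_vf \<alpha> a b)"
      using unary_vf_separating_vf assms(3,5) .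
    show "preserves_vf (separating_vf \<alpha> a b) \<rho>"
      using preserves_separating_vf assms(2,3,5-7) \<alpha> .
    show "apply_vf (separating_vf \<alpha> a b) \<alpha> = a"
      using \<alpha> assms(3) by (intro apply_separating_vf_self) (simp add: tuples_def)
  qed
  then show ?thesis using assms(2) by (auto simp: key_relation_def)
qed

end
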